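(* Let $N \ge 1$ be an integer and $p \in [0,1]$. Let $(K_1, K_2, K_3)$ be a multinomially distributed random vector with $N$ trials and cell probabilities $(1-p)^2$, $2(1-p)p$, $p^2$, i.e. \[ \Pr[K_1=k_1,K_2=k_2,K_3=k_3]=\binom{N}{k_1,k_2,k_3}(1-p)^{2k_1}\bigl(2(1-p)p\bigr)^{k_2}p^{2k_3} \] for nonnegative integers with $k_1+k_2+k_3=N$. Define \[ g(k_1,k_2)=\begin{cases}1 & \text{if } k_1=0 \text{ and } k_2=0,\\ 0 & \text{if } k_1>0 \text{ and } k_2=0,\\ \dfrac{k_2}{2k_1+k_2} & \text{otherwise.}\end{cases} \] Then \[ E[g(K_1,K_2)]=\frac{2N\,(p-p^{2N})}{2N-1}+p^{2N}. \]
   Context: This models $N$ RFID tags read in two independent reader sessions, where each tag is independently unread in each session with probability $p$; $K_1$ is the number of tags read in both sessions, $K_2$ the number read in exactly one session, $K_3$ the number read in neither. The quantity $g(K_1,K_2)$ is the estimator $\hat p$ of $p$. *)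

theory Defs
  imports Complex_Main
begin

definition multinom3 :: "nat \<Rightarrow> nat \<Rightarrow> nat \<Rightarrow> real" where
  "multinom3 k1 k2 k3 = fact (k1 + k2 + k3) / (fact k1 * fact k2 * fact k3)"

definition pmf3 :: "real \<Rightarrow> nat \<Rightarrow> nat \<Rightarrow> nat \<Rightarrow> real" where
  "pmf3 p k1 k2 k3 = multinom3 k1 k2 k3 * (1 - p) ^ (2 * k1)
      * (2 * (1 - p) * p) ^ k2 * p ^ (2 * k3)"

definition g :: "nat \<Rightarrow> nat \<Rightarrow> real" where
  "g k1 k2 = (if k1 = 0 \<and> k2 = 0 then 1
              else if k1 > 0 \<and> k2 = 0 then 0
              else real k2 / (2 * real k1 + real k2))"

definition supp3 :: "nat \<Rightarrow> (nat \<times> nat \<times> nat) set" where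
  "supp3 N = {(k1, k2, k3). k1 + k2 + k3 = N}"

definition expect_g :: "nat \<Rightarrow> real \<Rightarrow> real" where
  "expect_g N p = (\<Sum>(k1, k2, k3) \<in> supp3 N. g k1 k2 * pmf3 p k1 k2 k3)"

end

theory Submission imports Defs "HOL-Analysis.Analysis" begin

text \<open>Write \<open>q = 1 - p\<close>. Apart from the cell \<open>k\<^sub>1 = k\<^sub>2 = 0\<close>, which contributes
  \<open>p ^ (2N)\<close>, the estimator is \<open>k\<^sub>2 / (2k\<^sub>1 + k\<^sub>2) = k\<^sub>2 \<integral>\<^sub>0\<^sup>1 t ^ (2k\<^sub>1 + k\<^sub>2 - 1) dt\<close>.
  Under the integral the weights \<open>k\<^sub>2 \<cdot> pmf\<close> form the \<open>b\<close>-derivative of the trinomial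
  expansion of \<open>(a + b + c) ^ N\<close> at \<open>a = (qt)\<^sup>2, b = 2qpt, c = p\<^sup>2\<close>, so the integrand collapses
  to \<open>2Npq (qt + p) ^ (2N - 2)\<close>, whose integral over \<open>[0,1]\<close> is elementary.
  Everything is a polynomial identity in \<open>p\<close>.\<close>

lemma finite_supp3: "finite (supp3 N)"
proof -
  have "supp3 N \<subseteq> {..N} \<times> {..N} \<times> {..N}" unfolding supp3_def by auto
  thus ?thesis by (rule finite_subset) auto
qed

lemma supp3_eq_image_Sigma: "supp3 N = (\<lambda>(i, j). (i, j, N - i - j)) ` (SIGMA i:{..N}. {..N - i})"
  unfolding supp3_def by (auto simp: image_iff)

lemma multinom3_eq_binomial_product:
  assumes "i \<le> N" "j \<le> N - i"
  shows "multinom3 i j (N - i - j) = real (N choose i) * real ((N - i) choose j)"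
proof -
  have N: "i + j + (N - i - j) = N" using assms by auto
  have "real (N choose i) * real ((N - i) choose j)
      = fact N / (fact i * fact (N - i)) * (fact (N - i) / (fact j * fact (N - i - j)))"
    using assms by (simp add: binomial_fact)
  also have "\<dots> = fact N / (fact i * fact j * fact (N - i - j))"
    by (simp add: field_simps)
  finally show ?thesis unfolding multinom3_def N by simp
qed

lemma trinomial_expansion:
  fixes a b c :: real
  shows "(\<Sum>(k1, k2, k3)\<in>supp3 N. multinom3 k1 k2 k3 * a ^ k1 * b ^ k2 * c ^ k3) = (a + b + c) ^ N"
proof -
  have inj: "inj_on (\<lambda>(i, j). (i, j, N - i - j)) (SIGMA i:{..N}. {..N - i})"
    by (auto simp: inj_on_def)
  have "(\<Sum>(k1, k2, k3)\<in>supp3 N. multinom3 k1 k2 k3 * a ^ k1 * b ^ k2 * c ^ k3)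
      = (\<Sum>(i, j)\<in>(SIGMA i:{..N}. {..N - i}). multinom3 i j (N - i - j) * a ^ i * b ^ j * c ^ (N - i - j))"
    unfolding supp3_eq_image_Sigma by (subst sum.reindex[OF inj]) (simp add: case_prod_unfold)
  also have "\<dots> = (\<Sum>i\<le>N. \<Sum>j\<le>N - i. multinom3 i j (N - i - j) * a ^ i * b ^ j * c ^ (N - i - j))"
    by (subst sum.Sigma[symmetric]) auto
  also have "\<dots> = (\<Sum>i\<le>N. real (N choose i) * a ^ i
                    * (\<Sum>j\<le>N - i. real ((N - i) choose j) * b ^ j * c ^ (N - i - j)))"
    by (auto simp: sum_distrib_left multinom3_eq_binomial_product mult_ac simp del: diff_diff_left
             intro!: sum.cong)
  also have "\<dots> = (a + (b + c)) ^ N"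
    by (simp add: binomial_ring)
  finally show ?thesis by (simp add: add.assoc)
qed

lemma multinom3_Suc_middle:
  "real (Suc k2) * multinom3 k1 (Suc k2) k3 = real (Suc (k1 + k2 + k3)) * multinom3 k1 k2 k3"
  unfolding multinom3_def by (simp add: field_simps fact_Suc del: of_nat_Suc)

lemma trinomial_expansion_deriv:
  fixes a b c :: real
  shows "(\<Sum>(k1, k2, k3)\<in>supp3 (Suc M). real k2 * multinom3 k1 k2 k3 * a ^ k1 * b ^ (k2 - 1) * c ^ k3)
       = real (Suc M) * (a + b + c) ^ M"
proof -
  let ?shift = "\<lambda>(k1, k2, k3). (k1, Suc k2, k3)"
  have inj: "inj_on ?shift (supp3 M)" by (auto simp: inj_on_def)
  have sub: "?shift ` supp3 M \<subseteq> supp3 (Suc M)" by (auto simp: supp3_def)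
  have "(\<Sum>(k1, k2, k3)\<in>supp3 (Suc M). real k2 * multinom3 k1 k2 k3 * a ^ k1 * b ^ (k2 - 1) * c ^ k3)
      = (\<Sum>(k1, k2, k3)\<in>?shift ` supp3 M. real k2 * multinom3 k1 k2 k3 * a ^ k1 * b ^ (k2 - 1) * c ^ k3)"
  proof (rule sum.mono_neutral_right[OF finite_supp3 sub], safe)
    fix k1 k2 k3 assume "(k1, k2, k3) \<in> supp3 (Suc M)" "(k1, k2, k3) \<notin> ?shift ` supp3 M"
    hence "k2 = 0" unfolding supp3_def by (cases k2) (auto simp: image_iff)
    thus "real k2 * multinom3 k1 k2 k3 * a ^ k1 * b ^ (k2 - 1) * c ^ k3 = 0" by simp
  qed
  also have "\<dots> = (\<Sum>(k1, k2, k3)\<in>supp3 M. real (Suc k2) * multinom3 k1 (Suc k2) k3 * a ^ k1 * b ^ k2 * c ^ k3)"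
    by (subst sum.reindex[OF inj]) (simp add: case_prod_unfold)
  also have "\<dots> = (\<Sum>(k1, k2, k3)\<in>supp3 M. real (Suc M) * (multinom3 k1 k2 k3 * a ^ k1 * b ^ k2 * c ^ k3))"
  proof (intro sum.cong refl, clarify)
    fix k1 k2 k3 assume "(k1, k2, k3) \<in> supp3 M"
    hence "real (Suc k2) * multinom3 k1 (Suc k2) k3 = real (Suc M) * multinom3 k1 k2 k3"
      by (simp add: supp3_def multinom3_Suc_middle del: of_nat_Suc)
    thus "real (Suc k2) * multinom3 k1 (Suc k2) k3 * a ^ k1 * b ^ k2 * c ^ k3
        = real (Suc M) * (multinom3 k1 k2 k3 * a ^ k1 * b ^ k2 * c ^ k3)"
      by (simp only: mult.assoc)
  qed
  also have "\<dots> = real (Suc M) * (a + b + c) ^ M"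
    by (simp add: sum_distrib_left[symmetric] case_prod_unfold trinomial_expansion[unfolded case_prod_unfold])
  finally show ?thesis .
qed

lemma has_integral_affine_power_unit_interval:
  fixes p q :: real
  shows "((\<lambda>t. q * (q * t + p) ^ n) has_integral ((q + p) ^ Suc n - p ^ Suc n) / real (Suc n)) {0..1}"
proof -
  have "((\<lambda>t. q * (q * t + p) ^ n) has_integral
          (q * 1 + p) ^ Suc n / real (Suc n) - (q * 0 + p) ^ Suc n / real (Suc n)) {0..1}"
    by (intro fundamental_theorem_of_calculus)
       (auto intro!: derivative_eq_intros simp flip: has_real_derivative_iff_has_vector_derivative
             simp del: power_Suc of_nat_Suc)
  thus ?thesis by (simp add: diff_divide_distrib)
qed

lemma expect_g_eq:
  "expect_g N p = p ^ (2 * N)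
     + (\<Sum>(k1, k2, k3)\<in>supp3 N. real k2 / (2 * real k1 + real k2) * pmf3 p k1 k2 k3)"
proof -
  have g_eq: "g k1 k2 = (if k1 = 0 \<and> k2 = 0 then 1 else 0) + real k2 / (2 * real k1 + real k2)"
    for k1 k2 unfolding g_def by auto
  have "(\<Sum>(k1, k2, k3)\<in>supp3 N. (if k1 = 0 \<and> k2 = 0 then 1 else 0) * pmf3 p k1 k2 k3)
      = (\<Sum>x\<in>supp3 N. if x = (0, 0, N) then pmf3 p 0 0 N else 0)"
    by (rule sum.cong) (auto simp: supp3_def split: if_split_asm)
  also have "\<dots> = p ^ (2 * N)"
    by (simp add: finite_supp3 pmf3_def multinom3_def) (simp add: supp3_def)
  finally show ?thesis
    unfolding expect_g_def g_eq
    by (simp add: sum.distrib distrib_right case_prod_unfold)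
qed

lemma ratio_pmf3_has_integral:
  "((\<lambda>t. pmf3 p k1 k2 k3 * real k2 * t ^ (2 * k1 + k2 - 1)) has_integral
      real k2 / (2 * real k1 + real k2) * pmf3 p k1 k2 k3) {0..1}"
proof (cases k2)
  case (Suc j)
  have "((\<lambda>t. pmf3 p k1 k2 k3 * real k2 * t ^ (2 * k1 + k2 - 1)) has_integral
          pmf3 p k1 k2 k3 * real k2 * (1 / real (Suc (2 * k1 + k2 - 1)))) {0..1}"
    using has_integral_mult_right[OF has_integral_affine_power_unit_interval[of 1 0]] by simp
  moreover have "real (Suc (2 * k1 + k2 - 1)) = 2 * real k1 + real k2"
    using Suc by simp
  ultimately show ?thesis by (simp add: mult.commute)
qed simp

lemma ratio_pmf3_integrand_sum:
  fixes p t :: real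
  defines "q \<equiv> 1 - p"
  shows "(\<Sum>(k1, k2, k3)\<in>supp3 (Suc M). pmf3 p k1 k2 k3 * real k2 * t ^ (2 * k1 + k2 - 1))
       = 2 * real (Suc M) * p * (q * (q * t + p) ^ (2 * M))"
proof -
  have term_eq: "pmf3 p k1 k2 k3 * real k2 * t ^ (2 * k1 + k2 - 1)
      = 2 * q * p * (real k2 * multinom3 k1 k2 k3 * (q * q * t * t) ^ k1
          * (2 * q * p * t) ^ (k2 - 1) * (p * p) ^ k3)" for k1 k2 k3
  proof (cases k2)
    case (Suc j)
    hence "2 * k1 + k2 - 1 = 2 * k1 + j" by simp
    thus ?thesis unfolding pmf3_def q_def using Suc
      by (simp add: power_mult power_mult_distrib power2_eq_square power_add mult_ac)
  qed simp
  have "(\<Sum>(k1, k2, k3)\<in>supp3 (Suc M). pmf3 p k1 k2 k3 * real k2 * t ^ (2 * k1 + k2 - 1))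
      = 2 * q * p * (\<Sum>(k1, k2, k3)\<in>supp3 (Suc M). real k2 * multinom3 k1 k2 k3
          * (q * q * t * t) ^ k1 * (2 * q * p * t) ^ (k2 - 1) * (p * p) ^ k3)"
    by (simp only: term_eq sum_distrib_left case_prod_unfold)
  also have "\<dots> = 2 * q * p * (real (Suc M) * (q * q * t * t + 2 * q * p * t + p * p) ^ M)"
    by (simp only: trinomial_expansion_deriv)
  also have "q * q * t * t + 2 * q * p * t + p * p = (q * t + p) ^ 2"
    by (simp add: power2_eq_square algebra_simps)
  finally show ?thesis by (simp add: power_mult[symmetric] mult.commute[of 2 M] mult_ac)
qed

theorem lemma1:
  fixes N :: nat and p :: real
  assumes "N \<ge> 1" and "0 \<le> p" and "p \<le> 1"
  shows "expect_g N p = 2 * real N * (p - p ^ (2 * N)) / (2 * real N - 1) + p ^ (2 * N)"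
proof -
  obtain M where N: "N = Suc M" using assms(1) by (cases N) auto
  define q where "q = 1 - p"
  let ?S = "\<Sum>(k1, k2, k3)\<in>supp3 N. real k2 / (2 * real k1 + real k2) * pmf3 p k1 k2 k3"
  have "((\<lambda>t. \<Sum>(k1, k2, k3)\<in>supp3 N. pmf3 p k1 k2 k3 * real k2 * t ^ (2 * k1 + k2 - 1))
          has_integral ?S) {0..1}"
    unfolding case_prod_unfold by (intro has_integral_sum finite_supp3 ratio_pmf3_has_integral)
  moreover have "((\<lambda>t. 2 * real N * p * (q * (q * t + p) ^ (2 * M))) has_integral
          2 * real N * p * (((q + p) ^ Suc (2 * M) - p ^ Suc (2 * M)) / real (Suc (2 * M)))) {0..1}"
    by (intro has_integral_mult_right has_integral_affine_power_unit_interval)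
  ultimately have "?S = 2 * real N * p * ((1 - p ^ Suc (2 * M)) / real (Suc (2 * M)))"
    unfolding N ratio_pmf3_integrand_sum q_def by (auto dest: has_integral_unique)
  also have "\<dots> = 2 * real N * (p - p ^ (2 * N)) / (2 * real N - 1)"
    unfolding N by (simp add: right_diff_distrib mult_ac)
  finally show ?thesis by (simp add: expect_g_eq)
qed

end
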